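(* Let $p$ be a prime, $a\in\mathbb{Q}_p$, $a\ne0$, with $\sqrt{-a}\in\mathbb{Q}_p$, $A=|a|_p$, and $f(x)=\frac{ax}{x^2+a}$ on $\mathbb{Q}_p$. For every $r\in\{p^k:k\in\mathbb Z\}$ with $0<r<\sqrt A$, the measure-preserving dynamical system $(S_r(0),f,\mu)$ is not ergodic, where $\mu$ is the normalized Haar measure on $S_r(0)$.
   Context: $S_r(0)=\{x\in\mathbb{Q}_p:|x|_p=r\}$, equipped with the $\sigma$-algebra generated by its closed balls. The normalized Haar measure $\mu$ on $S_r(0)$ is the probability measure with $\mu(V_\rho(c))=\frac{p\rho}{r(p-1)}$ for every closed ball $V_\rho(c)=\{x:|x-c|_p\le\rho\}\subset S_r(0)$; $f$ maps $S_r(0)$ to itself and preserves $\mu$. A measure-preserving system is ergodic if every measurable set $V$ with $f^{-1}(V)=V$ (invariant set) has $\mu(V)\in\{0,1\}$. *)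

theory Defs
  imports "HOL-Probability.Probability" "HOL-Computational_Algebra.Primes"
begin

text \<open>The field of p-adic numbers, given as a field of characteristic 0 together with an
absolute value nrm characterising it as (an isomorphic copy of) the completion of the rationals
with respect to the p-adic absolute value: nrm is a non-archimedean absolute value that agrees
with the p-adic absolute value on the integers (hence on the rationals), the rationals are dense,
and the field is complete.  Such a structure is unique up to isometric isomorphism (it is Q_p).\<close>

definition padic_field :: "nat \<Rightarrow> ('a::field_char_0 \<Rightarrow> real) \<Rightarrow> bool" where
  "padic_field p nrm \<longleftrightarrow>
     (\<forall>x. nrm x \<ge> 0) \<and>
     (\<forall>x. nrm x = 0 \<longleftrightarrow> x = 0) \<and>
     (\<forall>x y. nrm (x * y) = nrm x * nrm y) \<and>
     (\<forall>x y. nrm (x + y) \<le> max (nrm x) (nrm y)) \<and>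
     (\<forall>n::int. n \<noteq> 0 \<longrightarrow>
        nrm (of_int n) = inverse (real p ^ multiplicity (int p) n)) \<and>
     (\<forall>x. \<forall>e>0. \<exists>q::rat. nrm (x - of_rat q) < e) \<and>
     (\<forall>X::nat \<Rightarrow> 'a. (\<forall>e>0. \<exists>N. \<forall>m\<ge>N. \<forall>n\<ge>N. nrm (X m - X n) < e) \<longrightarrow>
        (\<exists>L. (\<lambda>n. nrm (X n - L)) \<longlonglongrightarrow> 0))"

definition psphere :: "('a::field_char_0 \<Rightarrow> real) \<Rightarrow> real \<Rightarrow> 'a set" where
  "psphere nrm r = {x. nrm x = r}"

definition pcball :: "('a::field_char_0 \<Rightarrow> real) \<Rightarrow> real \<Rightarrow> 'a \<Rightarrow> 'a set" where
  "pcball nrm \<rho> c = {x. nrm (x - c) \<le> \<rho>}"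

definition pvalue :: "nat \<Rightarrow> real \<Rightarrow> bool" where
  "pvalue p \<rho> \<longleftrightarrow> (\<exists>k::int. \<rho> = real p powr real_of_int k)"

definition haar_sphere :: "nat \<Rightarrow> ('a::field_char_0 \<Rightarrow> real) \<Rightarrow> real \<Rightarrow> 'a measure \<Rightarrow> bool" where
  "haar_sphere p nrm r M \<longleftrightarrow>
     prob_space M \<and>
     space M = psphere nrm r \<and>
     sets M = sigma_sets (psphere nrm r)
        {pcball nrm \<rho> c | \<rho> c. pvalue p \<rho> \<and> pcball nrm \<rho> c \<subseteq> psphere nrm r} \<and>
     (\<forall>\<rho> c. pvalue p \<rho> \<and> pcball nrm \<rho> c \<subseteq> psphere nrm r \<longrightarrow>
        emeasure M (pcball nrm \<rho> c) = ennreal (real p * \<rho> / (r * (real p - 1))))"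

definition measure_preserving :: "'a measure \<Rightarrow> ('a \<Rightarrow> 'a) \<Rightarrow> bool" where
  "measure_preserving M f \<longleftrightarrow>
     f \<in> M \<rightarrow>\<^sub>M M \<and> (\<forall>A \<in> sets M. emeasure M (f -` A \<inter> space M) = emeasure M A)"

definition ergodic :: "'a measure \<Rightarrow> ('a \<Rightarrow> 'a) \<Rightarrow> bool" where
  "ergodic M f \<longleftrightarrow>
     (\<forall>V \<in> sets M. f -` V \<inter> space M = V \<longrightarrow> measure M V = 0 \<or> measure M V = 1)"

end

theory Submission
  imports Defs
begin

text \<open>Write \<open>f x = x + g x\<close> with \<open>g x = - x\<^sup>3 / (x\<^sup>2 + a)\<close>. Since \<open>\<surd>-a\<close> exists, \<open>\<surd>|a|\<close> lies in the
value group, so \<open>r < \<surd>|a|\<close> forces \<open>r \<le> \<surd>|a| / p\<close>. On \<open>S\<^sub>r(0)\<close> the perturbation \<open>g\<close> then has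
size \<open>r\<^sup>3/|a| \<le> r/p\<^sup>2\<close> and Lipschitz constant \<open>r\<^sup>2/|a| < 1\<close>. By the ultrametric inequality
\<open>f\<close> is an isometry of \<open>S\<^sub>r(0)\<close> whose range is dense (iterate \<open>x \<mapsto> c - g x\<close>), so the
preimage of every ball is a ball of the same radius and \<open>f\<close> preserves \<open>\<mu>\<close>. On the other hand
\<open>f\<close> moves no point by more than \<open>r/p\<^sup>2\<close>, so every ball of radius \<open>r/p\<^sup>2\<close> is invariant; its
measure is \<open>1/(p(p-1)) \<in> (0,1)\<close>.\<close>

locale ultrametric_abs =
  fixes nrm :: "'a::field_char_0 \<Rightarrow> real"
  assumes nrm_nonneg: "nrm x \<ge> 0"
    and nrm_eq_0_iff: "nrm x = 0 \<longleftrightarrow> x = 0"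
    and nrm_mult: "nrm (x * y) = nrm x * nrm y"
    and nrm_add_le_max: "nrm (x + y) \<le> max (nrm x) (nrm y)"
begin

lemma nrm_pos_iff: "nrm x > 0 \<longleftrightarrow> x \<noteq> 0"
  using nrm_nonneg[of x] nrm_eq_0_iff[of x] by linarith

lemma nrm_zero [simp]: "nrm 0 = 0"
  using nrm_eq_0_iff by simp

lemma nrm_one: "nrm 1 = 1"
  using nrm_mult[of 1 1] nrm_pos_iff[of 1] by simp

lemma nrm_minus: "nrm (- x) = nrm x"
proof -
  have "(nrm (-1))\<^sup>2 = 1"
    using nrm_mult[of "-1" "-1"] nrm_one by (simp add: power2_eq_square)
  then have "nrm (-1) = 1"
    using nrm_nonneg[of "-1"] by (auto simp: power2_eq_1_iff)
  then show ?thesis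
    using nrm_mult[of "-1" x] by simp
qed

lemma nrm_minus_commute: "nrm (x - y) = nrm (y - x)"
  using nrm_minus[of "x - y"] by simp

lemma nrm_power: "nrm (x ^ n) = nrm x ^ n"
  by (induction n) (simp_all add: nrm_one nrm_mult)

lemma nrm_divide: "nrm (x / y) = nrm x / nrm y"
proof (cases "y = 0")
  case False
  then have "nrm x = nrm (x / y) * nrm y" and "nrm y > 0"
    using nrm_mult[of "x / y" y] nrm_pos_iff by simp_all
  then show ?thesis by simp
qed simp

lemma nrm_add_eq_of_less: "nrm u < nrm v \<Longrightarrow> nrm (u + v) = nrm v"
  using nrm_add_le_max[of u v] nrm_add_le_max[of "u + v" "- u"] nrm_minus[of u] by auto

lemma nrm_diff_le_max: "nrm (x - z) \<le> max (nrm (x - y)) (nrm (y - z))"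
  using nrm_add_le_max[of "x - y" "y - z"] by simp

lemma pcball_subset_psphere:
  assumes "nrm c = r" "\<rho> < r"
  shows "pcball nrm \<rho> c \<subseteq> psphere nrm r"
  using assms nrm_add_eq_of_less[of "_ - c" c] by (force simp: pcball_def psphere_def)

lemma pcball_subset_psphereD:
  assumes "pcball nrm \<rho> c \<subseteq> psphere nrm r" "0 \<le> \<rho>" "0 < r"
  shows "nrm c = r" "\<rho> < r"
proof -
  have "c \<in> pcball nrm \<rho> c"
    using assms(2) by (simp add: pcball_def)
  then show c: "nrm c = r"
    using assms(1) by (auto simp: psphere_def)
  have "0 \<notin> pcball nrm \<rho> c"
    using assms(1,3) by (auto simp: psphere_def)
  then show "\<rho> < r"
    using c by (simp add: pcball_def nrm_minus)
qed

text \<open>Every point of a ball is a centre of it, so two balls are nested or disjoint.\<close>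

lemma pcball_subset_of_Int_nonempty:
  assumes "\<rho>1 \<le> \<rho>2" "pcball nrm \<rho>1 c1 \<inter> pcball nrm \<rho>2 c2 \<noteq> {}"
  shows "pcball nrm \<rho>1 c1 \<subseteq> pcball nrm \<rho>2 c2"
proof
  obtain z where z: "nrm (z - c1) \<le> \<rho>1" "nrm (z - c2) \<le> \<rho>2"
    using assms(2) by (auto simp: pcball_def)
  fix y assume "y \<in> pcball nrm \<rho>1 c1"
  then have "nrm (y - c1) \<le> \<rho>1" by (simp add: pcball_def)
  then show "y \<in> pcball nrm \<rho>2 c2"
    using z assms(1) nrm_diff_le_max[of y c2 c1] nrm_diff_le_max[of c1 c2 z]
      nrm_minus_commute[of c1 z] by (simp add: pcball_def)
qed

lemma vimage_pcball_eq_of_displacement_le: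
  assumes move: "\<And>x. nrm x = r \<Longrightarrow> nrm (h x - x) \<le> \<rho>" and "nrm c = r" "\<rho> < r"
  shows "h -` pcball nrm \<rho> c \<inter> psphere nrm r = pcball nrm \<rho> c"
proof (intro equalityI subsetI)
  fix x assume "x \<in> h -` pcball nrm \<rho> c \<inter> psphere nrm r"
  then have x: "nrm x = r" and "nrm (h x - c) \<le> \<rho>"
    by (auto simp: pcball_def psphere_def)
  then show "x \<in> pcball nrm \<rho> c"
    using move[OF x] nrm_diff_le_max[of x c "h x"] nrm_minus_commute[of x "h x"]
    by (simp add: pcball_def)
next
  fix x assume x: "x \<in> pcball nrm \<rho> c"
  then have x_r: "nrm x = r"
    using pcball_subset_psphere assms(2,3) by (auto simp: psphere_def)
  then show "x \<in> h -` pcball nrm \<rho> c \<inter> psphere nrm r"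
    using x move[OF x_r] nrm_diff_le_max[of "h x" c x] by (simp add: pcball_def psphere_def)
qed

end

lemma padic_field_ultrametric_abs: "padic_field p nrm \<Longrightarrow> ultrametric_abs nrm"
  unfolding padic_field_def by unfold_locales auto

lemma padic_field_nrm_in_value_group:
  assumes "padic_field p nrm" "prime p" "x \<noteq> 0"
  shows "pvalue p (nrm x)"
proof -
  interpret ultrametric_abs nrm
    using assms(1) by (rule padic_field_ultrametric_abs)
  have int: "\<And>n::int. n \<noteq> 0 \<Longrightarrow> nrm (of_int n) = inverse (real p ^ multiplicity (int p) n)"
    and dense: "\<And>e. e > 0 \<Longrightarrow> \<exists>q::rat. nrm (x - of_rat q) < e"
    using assms(1) unfolding padic_field_def by blast+
  have p0: "real p > 0"
    using assms(2) prime_gt_0_nat by simp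
  obtain q where "nrm (x - of_rat q) < nrm x"
    using dense assms(3) nrm_pos_iff by blast
  then have q: "nrm (of_rat q) = nrm x"
    using nrm_add_eq_of_less[of "of_rat q - x" x] nrm_minus_commute by simp
  obtain m n where mn: "q = Fract m n" "n > 0"
    by (cases q) auto
  then have "m \<noteq> 0"
    using q assms(3) nrm_pos_iff by (metis of_rat_0 rat_number_collapse(1))
  have "nrm x = nrm (of_int m) / nrm (of_int n)"
    using q mn by (simp add: of_rat_rat nrm_divide)
  also have "\<dots> = real p powr (real (multiplicity (int p) n) - real (multiplicity (int p) m))"
    using int \<open>m \<noteq> 0\<close> mn(2) p0 by (simp add: powr_diff powr_realpow divide_inverse mult.commute)
  finally show ?thesis
    unfolding pvalue_def by (metis of_int_diff of_int_of_nat_eq)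
qed

lemma pvalue_less_imp_mult_le:
  assumes "1 < real p" "pvalue p r" "pvalue p s" "r < s"
  shows "r * real p \<le> s"
proof -
  obtain k j :: int where k: "r = real p powr k" and j: "s = real p powr j"
    using assms(2,3) unfolding pvalue_def by blast
  then have "k + 1 \<le> j"
    using assms(1,4) by simp
  then have "real p powr (k + 1) \<le> s"
    using assms(1) j by simp
  then show ?thesis
    using assms(1) k by (simp add: powr_add)
qed

lemma pvalue_less_sqrt_nrm_imp_mult_le:
  assumes "padic_field p nrm" "prime p" "b * b = - a" "a \<noteq> 0" "pvalue p r" "r < sqrt (nrm a)"
  shows "r * real p \<le> sqrt (nrm a)"
proof -
  interpret ultrametric_abs nrm
    using assms(1) by (rule padic_field_ultrametric_abs)
  have "sqrt (nrm a) = nrm b"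
    using assms(3) nrm_mult[of b b] nrm_minus[of a] nrm_nonneg[of b] by (simp flip: power2_eq_square)
  moreover have "b \<noteq> 0"
    using assms(3,4) by auto
  then have "pvalue p (nrm b)"
    by (rule padic_field_nrm_in_value_group[OF assms(1,2)])
  moreover have "1 < real p"
    using assms(2) prime_gt_1_nat by simp
  ultimately show ?thesis
    using pvalue_less_imp_mult_le assms(5,6) by simp
qed

lemma square_less_of_square_mult_le:
  fixes r q A :: real
  assumes "0 < r" "1 < q" "r\<^sup>2 * q\<^sup>2 \<le> A"
  shows "r\<^sup>2 < A"
proof -
  have "r\<^sup>2 * 1 < r\<^sup>2 * q\<^sup>2"
    using assms(1,2) by (intro mult_strict_left_mono) (simp_all add: one_less_power)
  then show ?thesis
    using assms(3) by simp
qed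

locale sphere_contraction_perturbation = ultrametric_abs +
  fixes r l :: real and h :: "'a::field_char_0 \<Rightarrow> 'a"
  assumes r_pos: "0 < r" and l_nonneg: "0 \<le> l" and l_less_1: "l < 1"
    and displacement_less: "nrm x = r \<Longrightarrow> nrm (h x - x) < r"
    and displacement_lipschitz:
      "nrm x = r \<Longrightarrow> nrm y = r \<Longrightarrow> nrm ((h x - x) - (h y - y)) \<le> l * nrm (x - y)"
begin

lemma nrm_image: "nrm x = r \<Longrightarrow> nrm (h x) = r"
  using nrm_add_eq_of_less[of "h x - x" x] displacement_less by simp

lemma isometric:
  assumes "nrm x = r" "nrm y = r"
  shows "nrm (h x - h y) = nrm (x - y)"
proof (cases "x = y")
  case False
  then have "l * nrm (x - y) < 1 * nrm (x - y)"
    using l_less_1 nrm_pos_iff[of "x - y"] by (intro mult_strict_right_mono) auto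
  then have "nrm ((h x - x) - (h y - y)) < nrm (x - y)"
    using displacement_lipschitz[OF assms] by linarith
  then have "nrm (((h x - x) - (h y - y)) + (x - y)) = nrm (x - y)"
    by (rule nrm_add_eq_of_less)
  then show ?thesis
    by (simp add: algebra_simps)
qed simp

lemma dense_image:
  assumes c: "nrm c = r" and e: "0 < e"
  shows "\<exists>x. nrm x = r \<and> nrm (h x - c) \<le> e"
proof -
  \<comment> \<open>Picard iteration for \<open>h x = c\<close>; no completeness is needed since an approximate solution suffices.\<close>
  define X where "X n = ((\<lambda>x. c - (h x - x)) ^^ n) c" for n
  have X_Suc: "X (Suc n) = c - (h (X n) - X n)" for n
    unfolding X_def by simp
  have X_nrm: "nrm (X n) = r" for n
  proof (induction n)
    case (Suc n)
    have "nrm (- (h (X n) - X n)) < nrm c"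
      using displacement_less[OF Suc] c nrm_minus_commute[of "X n"] by simp
    then have "nrm (- (h (X n) - X n) + c) = nrm c"
      by (rule nrm_add_eq_of_less)
    then show ?case
      using c by (simp add: X_Suc algebra_simps)
  qed (simp add: X_def c)
  have X_step: "nrm (X (Suc n) - X n) \<le> l ^ n * r" for n
  proof (induction n)
    case 0
    show ?case
      using displacement_less[OF c] nrm_minus_commute[of c "h c"] by (simp add: X_def)
  next
    case (Suc n)
    have "X (Suc (Suc n)) - X (Suc n) = (c - (h (X (Suc n)) - X (Suc n))) - (c - (h (X n) - X n))"
      by (simp only: X_Suc)
    also have "\<dots> = (h (X n) - X n) - (h (X (Suc n)) - X (Suc n))"
      by (simp add: algebra_simps)
    finally have "nrm (X (Suc (Suc n)) - X (Suc n)) \<le> l * nrm (X n - X (Suc n))"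
      by (simp only: displacement_lipschitz[OF X_nrm X_nrm])
    also have "\<dots> \<le> l * (l ^ n * r)"
      using Suc l_nonneg nrm_minus_commute[of "X n"] by (simp add: mult_left_mono)
    finally show ?case
      by simp
  qed
  obtain n where "l ^ n < e / r"
    using real_arch_pow_inv[OF _ l_less_1] e r_pos by (meson divide_pos_pos)
  then have "l ^ n * r \<le> e"
    using r_pos by (simp add: field_simps)
  moreover have "nrm (h (X n) - c) = nrm (X (Suc n) - X n)"
    using nrm_minus_commute[of "h (X n)" c] by (simp add: X_Suc)
  ultimately show ?thesis
    using X_step[of n] X_nrm[of n] by fastforce
qed

lemma vimage_pcball:
  assumes ball: "pcball nrm \<rho> c \<subseteq> psphere nrm r" and "0 < \<rho>"
  shows "\<exists>c'. h -` pcball nrm \<rho> c \<inter> psphere nrm r = pcball nrm \<rho> c'"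
proof -
  have c: "nrm c = r" and "\<rho> < r"
    using pcball_subset_psphereD[OF ball] assms(2) r_pos by auto
  obtain c' where c': "nrm c' = r" "nrm (h c' - c) \<le> \<rho>"
    using dense_image[OF c assms(2)] by blast
  have "x \<in> h -` pcball nrm \<rho> c \<longleftrightarrow> x \<in> pcball nrm \<rho> c'" if "nrm x = r" for x
    using nrm_diff_le_max[of "h x" c "h c'"] nrm_diff_le_max[of "h x" "h c'" c]
      nrm_minus_commute[of "h c'" c] isometric[OF that c'(1)] c'(2)
    by (auto simp: pcball_def)
  moreover have "pcball nrm \<rho> c' \<subseteq> psphere nrm r"
    using pcball_subset_psphere[OF c'(1) \<open>\<rho> < r\<close>] .
  ultimately show ?thesis
    by (auto simp: psphere_def)
qed

end

lemma rational_map_minus_id: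
  fixes a x :: "'a::field"
  assumes "x\<^sup>2 + a \<noteq> 0"
  shows "a * x / (x\<^sup>2 + a) - x = - (x ^ 3 / (x\<^sup>2 + a))"
proof -
  have "a * x / (x\<^sup>2 + a) - x = (a * x - x * (x\<^sup>2 + a)) / (x\<^sup>2 + a)"
    using assms by (simp add: diff_divide_distrib)
  also have "a * x - x * (x\<^sup>2 + a) = - (x ^ 3)"
    by (simp add: algebra_simps power2_eq_square power3_eq_cube)
  finally show ?thesis by simp
qed

lemma cubic_quotient_diff:
  fixes a x y :: "'a::field"
  assumes "x\<^sup>2 + a \<noteq> 0" "y\<^sup>2 + a \<noteq> 0"
  shows "x ^ 3 / (x\<^sup>2 + a) - y ^ 3 / (y\<^sup>2 + a)
    = (x - y) * (x\<^sup>2 * y\<^sup>2 + a * (x\<^sup>2 + x * y + y\<^sup>2)) / ((x\<^sup>2 + a) * (y\<^sup>2 + a))"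
proof -
  have "x ^ 3 / (x\<^sup>2 + a) - y ^ 3 / (y\<^sup>2 + a)
      = (x ^ 3 * (y\<^sup>2 + a) - y ^ 3 * (x\<^sup>2 + a)) / ((x\<^sup>2 + a) * (y\<^sup>2 + a))"
    using assms by (rule diff_frac_eq)
  also have "x ^ 3 * (y\<^sup>2 + a) - y ^ 3 * (x\<^sup>2 + a) = (x - y) * (x\<^sup>2 * y\<^sup>2 + a * (x\<^sup>2 + x * y + y\<^sup>2))"
    by (simp add: algebra_simps power2_eq_square power3_eq_cube)
  finally show ?thesis .
qed

context ultrametric_abs
begin

lemma nrm_denominator:
  assumes "(nrm x)\<^sup>2 < nrm a"
  shows "nrm (x\<^sup>2 + a) = nrm a"
  using nrm_add_eq_of_less[of "x\<^sup>2" a] assms by (simp add: nrm_power)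

lemma nrm_cubic_term:
  assumes "nrm x = r" "r\<^sup>2 < nrm a"
  shows "nrm (x ^ 3 / (x\<^sup>2 + a)) = r ^ 3 / nrm a"
  using assms nrm_denominator[of x a] by (simp add: nrm_divide nrm_power)

lemma cubic_term_lipschitz:
  assumes x: "nrm x = r" and y: "nrm y = r" and A: "r\<^sup>2 < nrm a"
  shows "nrm (x ^ 3 / (x\<^sup>2 + a) - y ^ 3 / (y\<^sup>2 + a)) \<le> r\<^sup>2 / nrm a * nrm (x - y)"
proof -
  have A0: "nrm a > 0"
    using A zero_le_power2[of r] by linarith
  have dx: "nrm (x\<^sup>2 + a) = nrm a" and dy: "nrm (y\<^sup>2 + a) = nrm a"
    using nrm_denominator A x y by auto
  then have "x\<^sup>2 + a \<noteq> 0" "y\<^sup>2 + a \<noteq> 0"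
    using A0 by auto
  note diff = cubic_quotient_diff[OF this]
  have "nrm (x\<^sup>2 + x * y + y\<^sup>2) \<le> r\<^sup>2"
    using nrm_add_le_max[of "x\<^sup>2 + x * y" "y\<^sup>2"] nrm_add_le_max[of "x\<^sup>2" "x * y"] x y
    by (simp add: nrm_power nrm_mult power2_eq_square)
  then have "nrm (a * (x\<^sup>2 + x * y + y\<^sup>2)) \<le> nrm a * r\<^sup>2"
    using A0 by (simp add: nrm_mult)
  moreover have "r\<^sup>2 * r\<^sup>2 \<le> nrm a * r\<^sup>2"
    using A by (intro mult_right_mono) auto
  then have "nrm (x\<^sup>2 * y\<^sup>2) \<le> nrm a * r\<^sup>2"
    using x y by (simp add: nrm_mult nrm_power)
  ultimately have num: "nrm (x\<^sup>2 * y\<^sup>2 + a * (x\<^sup>2 + x * y + y\<^sup>2)) \<le> nrm a * r\<^sup>2"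
    using nrm_add_le_max[of "x\<^sup>2 * y\<^sup>2" "a * (x\<^sup>2 + x * y + y\<^sup>2)"] by linarith
  have "nrm (x ^ 3 / (x\<^sup>2 + a) - y ^ 3 / (y\<^sup>2 + a))
      = nrm (x - y) * nrm (x\<^sup>2 * y\<^sup>2 + a * (x\<^sup>2 + x * y + y\<^sup>2)) / (nrm a * nrm a)"
    unfolding diff by (simp add: nrm_divide nrm_mult dx dy)
  also have "\<dots> \<le> nrm (x - y) * (nrm a * r\<^sup>2) / (nrm a * nrm a)"
    using num nrm_nonneg[of "x - y"] by (intro divide_right_mono mult_left_mono) auto
  also have "\<dots> = r\<^sup>2 / nrm a * nrm (x - y)"
    using A0 by (simp add: field_simps power2_eq_square)
  finally show ?thesis .
qed

lemma nrm_rational_map_displacement: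
  assumes "nrm x = r" "r\<^sup>2 < nrm a"
  shows "nrm (a * x / (x\<^sup>2 + a) - x) = r ^ 3 / nrm a"
proof -
  have "nrm (x\<^sup>2 + a) = nrm a"
    using nrm_denominator[of x a] assms by simp
  moreover have "nrm a > 0"
    using assms(2) zero_le_power2[of r] by linarith
  ultimately have "x\<^sup>2 + a \<noteq> 0"
    by auto
  then show ?thesis
    using assms by (simp add: rational_map_minus_id nrm_minus nrm_cubic_term)
qed

lemma nrm_rational_map_displacement_le:
  assumes "nrm x = r" "0 < r" "1 < q" "r\<^sup>2 * q\<^sup>2 \<le> nrm a"
  shows "nrm (a * x / (x\<^sup>2 + a) - x) \<le> r / q\<^sup>2"
proof -
  have A: "r\<^sup>2 < nrm a"
    using square_less_of_square_mult_le assms(2-4) .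
  then have "0 < nrm a"
    using zero_le_power2[of r] by linarith
  moreover have "r * (r\<^sup>2 * q\<^sup>2) \<le> r * nrm a"
    using assms(2,4) by simp
  ultimately have "r ^ 3 / nrm a \<le> r / q\<^sup>2"
    using assms(3) by (simp add: field_simps power2_eq_square power3_eq_cube)
  then show ?thesis
    using nrm_rational_map_displacement[OF assms(1) A] by simp
qed

lemma rational_map_sphere_contraction_perturbation:
  assumes "0 < r" "r\<^sup>2 < nrm a"
  shows "sphere_contraction_perturbation nrm r (r\<^sup>2 / nrm a) (\<lambda>x. a * x / (x\<^sup>2 + a))"
proof
  have A0: "nrm a > 0"
    using assms(2) zero_le_power2[of r] by linarith
  then show "0 \<le> r\<^sup>2 / nrm a" "r\<^sup>2 / nrm a < 1"
    using assms by simp_all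
  show "0 < r" by fact
  have nonzero: "x\<^sup>2 + a \<noteq> 0" if "nrm x = r" for x
    using nrm_denominator[of x a] that assms A0 by auto
  show "nrm (a * x / (x\<^sup>2 + a) - x) < r" if "nrm x = r" for x
  proof -
    have "r ^ 3 / nrm a = r * (r\<^sup>2 / nrm a)"
      by (simp add: power2_eq_square power3_eq_cube)
    also have "\<dots> < r * 1"
      using assms A0 by (intro mult_strict_left_mono) simp_all
    finally show ?thesis
      using nrm_rational_map_displacement[OF that assms(2)] by simp
  qed
  show "nrm ((a * x / (x\<^sup>2 + a) - x) - (a * y / (y\<^sup>2 + a) - y)) \<le> r\<^sup>2 / nrm a * nrm (x - y)"
    if "nrm x = r" "nrm y = r" for x y
    using cubic_term_lipschitz[OF that assms(2)] nrm_minus_commute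
    by (simp add: rational_map_minus_id nonzero that)
qed

end

lemma Int_stable_insert_nested_or_disjoint:
  assumes "G \<subseteq> Pow \<Omega>" and nested: "\<And>X Y. X \<in> G \<Longrightarrow> Y \<in> G \<Longrightarrow> X \<inter> Y = {} \<or> X \<subseteq> Y \<or> Y \<subseteq> X"
  shows "Int_stable (insert \<Omega> (insert {} G))"
  unfolding Int_stable_def
proof (intro ballI)
  fix X Y assume XY: "X \<in> insert \<Omega> (insert {} G)" "Y \<in> insert \<Omega> (insert {} G)"
  then have sub: "X \<subseteq> \<Omega>" "Y \<subseteq> \<Omega>"
    using assms(1) by auto
  consider "X = {} \<or> Y = {}" | "X = \<Omega>" | "Y = \<Omega>" | "X \<in> G" "Y \<in> G"
    using XY by blast
  then show "X \<inter> Y \<in> insert \<Omega> (insert {} G)"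
  proof cases
    case 4
    then consider "X \<inter> Y = {}" | "X \<subseteq> Y" | "Y \<subseteq> X"
      using nested by blast
    then show ?thesis
      by cases (simp_all add: Int_absorb1 Int_absorb2 4)
  qed (use XY sub in \<open>auto simp: Int_absorb1 Int_absorb2\<close>)
qed

context ultrametric_abs
begin

text \<open>Preimages of generating balls are generating balls of the same radius, hence of the same
measure; the generators together with \<open>{}\<close> and the sphere form an \<open>\<inter>\<close>-stable family.\<close>

lemma haar_sphere_measure_preserving:
  assumes M: "haar_sphere p nrm r M" and "0 < p"
    and into: "\<And>x. nrm x = r \<Longrightarrow> nrm (f x) = r"
    and vimage: "\<And>\<rho> c. pcball nrm \<rho> c \<subseteq> psphere nrm r \<Longrightarrow> 0 < \<rho> \<Longrightarrow>
        \<exists>c'. f -` pcball nrm \<rho> c \<inter> psphere nrm r = pcball nrm \<rho> c'"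
  shows "measure_preserving M f"
proof -
  define \<Omega> where "\<Omega> = psphere nrm r"
  define G where "G = {pcball nrm \<rho> c | \<rho> c. pvalue p \<rho> \<and> pcball nrm \<rho> c \<subseteq> \<Omega>}"
  interpret prob_space M
    using M by (simp add: haar_sphere_def)
  have space: "space M = \<Omega>" and sets: "sets M = sigma_sets \<Omega> G"
    and ball_measure: "\<And>\<rho> c. pvalue p \<rho> \<Longrightarrow> pcball nrm \<rho> c \<subseteq> \<Omega> \<Longrightarrow>
        emeasure M (pcball nrm \<rho> c) = ennreal (real p * \<rho> / (r * (real p - 1)))"
    using M unfolding haar_sphere_def \<Omega>_def G_def by auto
  have G_Pow: "G \<subseteq> Pow \<Omega>"
    unfolding G_def by blast
  have G_sets: "G \<subseteq> sets M"
    using sets by auto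
  have G_vimage: "f -` X \<inter> \<Omega> \<in> G \<and> emeasure M (f -` X \<inter> \<Omega>) = emeasure M X" if "X \<in> G" for X
  proof -
    obtain \<rho> c where X: "X = pcball nrm \<rho> c" "pvalue p \<rho>" "pcball nrm \<rho> c \<subseteq> \<Omega>"
      using \<open>X \<in> G\<close> unfolding G_def by blast
    have "0 < \<rho>"
      using X(2) \<open>0 < p\<close> by (auto simp: pvalue_def)
    then obtain c' where c': "f -` X \<inter> \<Omega> = pcball nrm \<rho> c'"
      using vimage X unfolding \<Omega>_def by blast
    moreover have "c' \<in> pcball nrm \<rho> c'"
      using \<open>0 < \<rho>\<close> by (simp add: pcball_def)
    ultimately have "pcball nrm \<rho> c' \<subseteq> \<Omega>"
      using c' by blast
    then show ?thesis
      using c' X ball_measure unfolding G_def by auto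
  qed
  have measurable: "f \<in> M \<rightarrow>\<^sub>M M"
  proof (rule measurable_sigma_sets[OF sets G_Pow])
    show "f \<in> space M \<rightarrow> \<Omega>"
      using into space by (auto simp: \<Omega>_def psphere_def)
    show "f -` X \<inter> space M \<in> sets M" if "X \<in> G" for X
      using G_vimage[OF that] G_sets space by auto
  qed
  define E where "E = insert \<Omega> (insert {} G)"
  have sigma_E: "sigma_sets \<Omega> E = sigma_sets \<Omega> G"
  proof
    show "sigma_sets \<Omega> E \<subseteq> sigma_sets \<Omega> G"
      by (rule sigma_sets_mono) (auto simp: E_def sigma_sets_top intro: sigma_sets.Empty)
    show "sigma_sets \<Omega> G \<subseteq> sigma_sets \<Omega> E"
      by (rule sigma_sets_subseteq) (auto simp: E_def)
  qed
  have "M = distr M M f"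
  proof (rule measure_eqI_generator_eq[where E = E and \<Omega> = \<Omega> and A = "\<lambda>_. \<Omega>"])
    show "Int_stable E"
      unfolding E_def
    proof (rule Int_stable_insert_nested_or_disjoint[OF G_Pow])
      fix X Y assume "X \<in> G" "Y \<in> G"
      then obtain \<rho>1 c1 \<rho>2 c2 where "X = pcball nrm \<rho>1 c1" "Y = pcball nrm \<rho>2 c2"
        unfolding G_def by blast
      then show "X \<inter> Y = {} \<or> X \<subseteq> Y \<or> Y \<subseteq> X"
        using pcball_subset_of_Int_nonempty[of \<rho>1 \<rho>2 c1 c2] pcball_subset_of_Int_nonempty[of \<rho>2 \<rho>1 c2 c1]
        by (cases "\<rho>1 \<le> \<rho>2") (auto simp: Int_commute)
    qed
    show "E \<subseteq> Pow \<Omega>"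
      using G_Pow by (auto simp: E_def)
    show "sets M = sigma_sets \<Omega> E" "sets (distr M M f) = sigma_sets \<Omega> E"
      using sets sigma_E by simp_all
    show "range (\<lambda>_. \<Omega>) \<subseteq> E" "(\<Union>i. \<Omega>) = \<Omega>" "emeasure M \<Omega> \<noteq> \<infinity>"
      using space by (simp_all add: E_def)
    show "emeasure M X = emeasure (distr M M f) X" if XE: "X \<in> E" for X
    proof -
      have X: "X \<in> sets M"
        using XE G_sets space unfolding E_def by auto
      have "emeasure M (f -` X \<inter> \<Omega>) = emeasure M X"
      proof -
        consider "X = \<Omega>" | "X = {}" | "X \<in> G"
          using XE unfolding E_def by blast
        then show ?thesis
        proof cases
          case 1
          then have "f -` X \<inter> \<Omega> = \<Omega>"
            using into by (auto simp: \<Omega>_def psphere_def)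
          then show ?thesis
            using 1 by simp
        qed (use G_vimage in auto)
      qed
      then show ?thesis
        using emeasure_distr[OF measurable X] space by simp
    qed
  qed
  show ?thesis
    unfolding measure_preserving_def
  proof (intro conjI ballI measurable)
    fix A assume A: "A \<in> sets M"
    have "emeasure M (f -` A \<inter> space M) = emeasure (distr M M f) A"
      using emeasure_distr[OF measurable A] by simp
    also have "\<dots> = emeasure M A"
      using \<open>M = distr M M f\<close> by simp
    finally show "emeasure M (f -` A \<inter> space M) = emeasure M A" .
  qed
qed

lemma haar_sphere_not_ergodic:
  assumes M: "haar_sphere p nrm r M" and "2 \<le> p" and "pvalue p r"
    and move: "\<And>x. nrm x = r \<Longrightarrow> nrm (f x - x) \<le> r / (real p)\<^sup>2"
  shows "\<not> ergodic M f"
proof -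
  interpret prob_space M
    using M by (simp add: haar_sphere_def)
  have space: "space M = psphere nrm r"
    and sets: "sets M = sigma_sets (psphere nrm r)
        {pcball nrm \<rho> c | \<rho> c. pvalue p \<rho> \<and> pcball nrm \<rho> c \<subseteq> psphere nrm r}"
    and ball_measure: "\<And>\<rho> c. pvalue p \<rho> \<Longrightarrow> pcball nrm \<rho> c \<subseteq> psphere nrm r \<Longrightarrow>
        emeasure M (pcball nrm \<rho> c) = ennreal (real p * \<rho> / (r * (real p - 1)))"
    using M unfolding haar_sphere_def by auto
  have p: "real p \<ge> 2"
    using assms(2) by simp
  obtain k :: int where k: "r = real p powr k"
    using assms(3) unfolding pvalue_def by blast
  then have "0 < r"
    using p by simp
  obtain c where "c \<in> space M"
    using not_empty by blast
  then have c: "nrm c = r"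
    using space by (simp add: psphere_def)
  define \<rho> where "\<rho> = r / (real p)\<^sup>2"
  have "pvalue p \<rho>"
    unfolding pvalue_def \<rho>_def k using p
    by (intro exI[of _ "k - 2"]) (simp add: powr_diff powr_realpow)
  have "1 < (real p)\<^sup>2"
    using p one_less_power[of "real p" 2] by simp
  then have "r * 1 < r * (real p)\<^sup>2"
    using \<open>0 < r\<close> by (rule mult_strict_left_mono)
  then have "\<rho> < r"
    unfolding \<rho>_def using p by (simp add: divide_less_eq)
  then have ball: "pcball nrm \<rho> c \<subseteq> psphere nrm r"
    using pcball_subset_psphere c by blast
  then have "pcball nrm \<rho> c \<in> sets M"
    using sets \<open>pvalue p \<rho>\<close> by auto
  moreover have "f -` pcball nrm \<rho> c \<inter> space M = pcball nrm \<rho> c"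
    using vimage_pcball_eq_of_displacement_le[OF _ c \<open>\<rho> < r\<close>] move space
    unfolding \<rho>_def by blast
  moreover have "real p * \<rho> / (r * (real p - 1)) = 1 / (real p * (real p - 1))"
    unfolding \<rho>_def using \<open>0 < r\<close> p by (simp add: field_simps power2_eq_square)
  then have "measure M (pcball nrm \<rho> c) = 1 / (real p * (real p - 1))"
    using ball_measure[OF \<open>pvalue p \<rho>\<close> ball] p by (simp add: measure_def)
  moreover have "0 < 1 / (real p * (real p - 1))" "1 / (real p * (real p - 1)) < 1"
    using p mult_mono[of 2 "real p" 1 "real p - 1"] by simp_all
  ultimately show ?thesis
    unfolding ergodic_def by force
qed

end

theorem theorem3p5:
  fixes p :: nat and nrm :: "'a::field_char_0 \<Rightarrow> real" and a :: 'a
    and r :: real and M :: "'a measure"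
  assumes "prime p"
    and "padic_field p nrm"
    and "a \<noteq> 0"
    and "\<exists>b. b * b = - a"
    and "pvalue p r"
    and "0 < r" and "r < sqrt (nrm a)"
    and "haar_sphere p nrm r M"
  shows "measure_preserving M (\<lambda>x. a * x / (x ^ 2 + a))
         \<and> \<not> ergodic M (\<lambda>x. a * x / (x ^ 2 + a))"
proof -
  interpret ultrametric_abs nrm
    using assms(2) by (rule padic_field_ultrametric_abs)
  have p: "1 < real p" "0 < p" "2 \<le> p"
    using assms(1) prime_gt_1_nat prime_gt_0_nat prime_ge_2_nat by auto
  obtain b where "b * b = - a"
    using assms(4) by blast
  then have "r * real p \<le> sqrt (nrm a)"
    using pvalue_less_sqrt_nrm_imp_mult_le assms(1-3,5,7) by blast
  then have "(r * real p)\<^sup>2 \<le> nrm a"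
    using assms(6) nrm_nonneg[of a] power_mono[of "r * real p" "sqrt (nrm a)" 2] by simp
  then have radius: "r\<^sup>2 * (real p)\<^sup>2 \<le> nrm a"
    by (simp add: power_mult_distrib)
  interpret sphere_contraction_perturbation nrm r "r\<^sup>2 / nrm a" "\<lambda>x. a * x / (x\<^sup>2 + a)"
    using rational_map_sphere_contraction_perturbation assms(6)
      square_less_of_square_mult_le[OF assms(6) p(1) radius] .
  show ?thesis
  proof
    show "measure_preserving M (\<lambda>x. a * x / (x\<^sup>2 + a))"
      by (rule haar_sphere_measure_preserving[OF assms(8) p(2) nrm_image vimage_pcball])
    show "\<not> ergodic M (\<lambda>x. a * x / (x\<^sup>2 + a))"
      by (rule haar_sphere_not_ergodic[OF assms(8) p(3) assms(5)
            nrm_rational_map_displacement_le[OF _ assms(6) p(1) radius]])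
  qed
qed

end
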